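(* Let $d\in\mathbb{N}$. Let $(X_S,Y_S)\sim\mathcal{N}(\mu_S,\Sigma_S)$ and $(X_T,Y_T)\sim\mathcal{N}(\mu_T,\Sigma_T)$ be $(d+1)$-dimensional Gaussian random vectors (source and target data) with $$\mu_\cdot=\begin{pmatrix}\mu_{\cdot,X}\\ \mu_{\cdot,Y}\end{pmatrix},\qquad \Sigma_\cdot=\begin{pmatrix}\Sigma_{\cdot,X}&\Sigma_{\cdot,XY}\\ \Sigma_{\cdot,YX}&\Sigma_{\cdot,Y}\end{pmatrix},$$ where $\mu_{\cdot,X},\Sigma_{\cdot,XY}\in\mathbb{R}^d$, $\mu_{\cdot,Y},\Sigma_{\cdot,Y}\in\mathbb{R}$, $\Sigma_{\cdot,YX}=\Sigma_{\cdot,XY}^\top$, and $\Sigma_{\cdot,X}\in\mathbb{R}^{d\times d}$ is invertible, for $\cdot\in\{S,T\}$. For $f:\mathbb{R}^d\to\mathbb{R}$ let $\mathcal{L}_S(f)=\mathbb{E}|Y_S-f(X_S)|^2$ and $\mathcal{L}_T(f)=\mathbb{E}|Y_T-f(X_T)|^2$, and let $f_\cdot^*(x)=w_\cdot^\top x+b_\cdot$ with $w_\cdot=\Sigma_{\cdot,X}^{-1}\Sigma_{\cdot,XY}$, $b_\cdot=\mu_{\cdot,Y}-\Sigma_{\cdot,YX}\Sigma_{\cdot,X}^{-1}\mu_{\cdot,X}$ (the minimizers of $\mathcal{L}_\cdot$ over all functions $\mathbb{R}^d\to\mathbb{R}$). Define the regret $\mathcal{R}(S,T):=\mathcal{L}_T(f_S^*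 )-\mathcal{L}_T(f_T^* )$ and the Wasserstein-based transfer risk $\mathcal{C}_W(S,T):=\mathcal{W}_2(\mathbb{P}_{ST},\mathbb{P}_T)^2$, where $\mathbb{P}_{ST}=\mathrm{Law}(f_S^*(X_T))$ and $\mathbb{P}_T=\mathrm{Law}(f_T^*(X_T))$. Then $$\mathcal{C}_W(S,T)\leq\mathcal{R}(S,T).$$
   Context: This is transfer learning with identity input and output transport maps, so the only intermediate model is the pretrained source model $f_S^*$ applied to the target input. $\mathcal{W}_2(\mu,\nu)^2=\inf_{\gamma\in\Pi(\mu,\nu)}\int|x-y|^2\gamma(dx,dy)$ over couplings $\gamma$ of probability measures $\mu,\nu$ on $\mathbb{R}$. *)

theory Defs
  imports "HOL-Probability.Probability"
begin

definition real_normal :: "'s measure \<Rightarrow> ('s \<Rightarrow> real) \<Rightarrow> real \<Rightarrow> real \<Rightarrow> bool" where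
  "real_normal M Z m v \<longleftrightarrow> Z \<in> borel_measurable M \<and> v \<ge> 0 \<and>
     (if v = 0 then (AE \<omega> in M. Z \<omega> = m)
      else distributed M lborel Z (\<lambda>x. ennreal (normal_density m (sqrt v) x)))"

text \<open>(X, Y) with X in R^d, Y in R is a (d+1)-dimensional Gaussian vector with mean
  (muX, muY) and covariance [[SX, SXY], [SXY^T, SY]]: every linear combination
  u.X + t Y is normal with mean u.muX + t muY and variance (u,t)^T Sigma (u,t).\<close>
definition gaussian_XY ::
  "'s measure \<Rightarrow> ('s \<Rightarrow> real^'d) \<Rightarrow> ('s \<Rightarrow> real) \<Rightarrow> real^'d \<Rightarrow> real
   \<Rightarrow> real^'d^'d \<Rightarrow> real^'d \<Rightarrow> real \<Rightarrow> bool" where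
  "gaussian_XY M X Y muX muY SX SXY SY \<longleftrightarrow>
     X \<in> borel_measurable M \<and> Y \<in> borel_measurable M \<and>
     (\<forall>u t. real_normal M (\<lambda>\<omega>. u \<bullet> X \<omega> + t * Y \<omega>)
              (u \<bullet> muX + t * muY)
              (u \<bullet> (SX *v u) + 2 * t * (SXY \<bullet> u) + t\<^sup>2 * SY))"

definition f_star :: "real^'d \<Rightarrow> real \<Rightarrow> real^'d^'d \<Rightarrow> real^'d \<Rightarrow> real^'d \<Rightarrow> real" where
  "f_star muX muY SX SXY x =
     (matrix_inv SX *v SXY) \<bullet> x + (muY - SXY \<bullet> (matrix_inv SX *v muX))"

definition sq_loss :: "'s measure \<Rightarrow> ('s \<Rightarrow> real^'d) \<Rightarrow> ('s \<Rightarrow> real) \<Rightarrow> (real^'d \<Rightarrow> real) \<Rightarrow> real" where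
  "sq_loss M X Y f = (\<integral>\<omega>. (Y \<omega> - f (X \<omega>))\<^sup>2 \<partial>M)"

definition couplings :: "real measure \<Rightarrow> real measure \<Rightarrow> (real \<times> real) measure set" where
  "couplings \<mu> \<nu> = {\<gamma>. prob_space \<gamma> \<and> sets \<gamma> = sets (borel \<Otimes>\<^sub>M borel) \<and>
      distr \<gamma> borel fst = \<mu> \<and> distr \<gamma> borel snd = \<nu>}"

definition wasserstein2_sq :: "real measure \<Rightarrow> real measure \<Rightarrow> ennreal" where
  "wasserstein2_sq \<mu> \<nu> =
     (INF \<gamma>\<in>couplings \<mu> \<nu>. \<integral>\<^sup>+ p. ennreal ((fst p - snd p)\<^sup>2) \<partial>\<gamma>)"

end

theory Submission imports Defs begin

(* For Gaussian data the squared loss of an affine predictor is an explicit quadratic in its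
   coefficients, and f* solves the normal equations Sigma_X w = Sigma_XY. Expanding the
   quadratic shows that the regret of any affine predictor g on the target is exactly
   E |g(X_T) - f_T*(X_T)|^2 (Pythagoras in L^2). For g = f_S*, the joint law of
   (f_S*(X_T), f_T*(X_T)) is a coupling of the two laws whose cost is that quantity. *)

lemma normal_density_sq_moment:
  fixes m \<sigma> b :: real
  assumes "\<sigma> > 0"
  shows "has_bochner_integral lborel (\<lambda>x. normal_density m \<sigma> x * (x - b)\<^sup>2) (\<sigma>\<^sup>2 + (m - b)\<^sup>2)"
proof -
  have second: "has_bochner_integral lborel (\<lambda>x. normal_density m \<sigma> x * (x - m)^(2*1)) (\<sigma>\<^sup>2)"
    using normal_moment_even[OF assms, of m 1] assms by (simp add: field_simps)
  have first: "has_bochner_integral lborel (\<lambda>x. normal_density m \<sigma> x * (x - m)^(2*0+1)) 0"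
    by (rule normal_moment_odd[OF assms])
  have zeroth: "has_bochner_integral lborel (normal_density m \<sigma>) 1"
    using has_bochner_integral_integrable[OF integrable_normal_density[OF assms]] assms by simp
  have "has_bochner_integral lborel
      (\<lambda>x. normal_density m \<sigma> x * (x - m)^(2*1) + (2*(m-b)) * (normal_density m \<sigma> x * (x - m)^(2*0+1))
           + (m-b)\<^sup>2 * normal_density m \<sigma> x)
      (\<sigma>\<^sup>2 + (2*(m-b)) * 0 + (m-b)\<^sup>2 * 1)"
    by (intro has_bochner_integral_add has_bochner_integral_mult_right second first zeroth)
  then show ?thesis
    by (simp add: power2_eq_square algebra_simps)
qed

lemma real_normal_sq_moment:
  assumes "prob_space M" and "real_normal M Z m v"
  shows "has_bochner_integral M (\<lambda>\<omega>. (Z \<omega> - b)\<^sup>2) (v + (m - b)\<^sup>2)"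
proof (cases "v = 0")
  case True
  interpret prob_space M by fact
  have [measurable]: "Z \<in> borel_measurable M" and "AE \<omega> in M. Z \<omega> = m"
    using assms(2) True by (auto simp: real_normal_def)
  then have "AE \<omega> in M. (m - b)\<^sup>2 = (Z \<omega> - b)\<^sup>2"
    by auto
  moreover have "has_bochner_integral M (\<lambda>_. (m - b)\<^sup>2) ((m - b)\<^sup>2)"
    using has_bochner_integral_integrable[of M "\<lambda>_. (m - b)\<^sup>2"] by (simp add: prob_space)
  ultimately show ?thesis
    using True has_bochner_integral_cong_AE[of "\<lambda>_. (m - b)\<^sup>2" M "\<lambda>\<omega>. (Z \<omega> - b)\<^sup>2"] by simp
next
  case False
  then have "v > 0" and D: "distributed M lborel Z (\<lambda>x. ennreal (normal_density m (sqrt v) x))"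
    using assms(2) by (auto simp: real_normal_def)
  then have moment: "has_bochner_integral lborel (\<lambda>x. normal_density m (sqrt v) x * (x - b)\<^sup>2) (v + (m - b)\<^sup>2)"
    using normal_density_sq_moment[of "sqrt v" m b] by simp
  then show ?thesis
    using distributed_integrable[OF D, of "\<lambda>x. (x - b)\<^sup>2"] distributed_integral[OF D, of "\<lambda>x. (x - b)\<^sup>2"]
    by (auto simp: has_bochner_integral_iff)
qed

lemma gaussian_XY_affine_sq_moment:
  assumes "prob_space M" and "gaussian_XY M X Y muX muY SX SXY SY"
  shows "has_bochner_integral M (\<lambda>\<omega>. (u \<bullet> X \<omega> + t * Y \<omega> - c)\<^sup>2)
           (u \<bullet> (SX *v u) + 2 * t * (SXY \<bullet> u) + t\<^sup>2 * SY + (u \<bullet> muX + t * muY - c)\<^sup>2)"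
  using assms by (auto simp: gaussian_XY_def intro: real_normal_sq_moment)

lemma matrix_inv_right:
  fixes A :: "real^'n^'n"
  assumes "invertible A"
  shows "A ** matrix_inv A = mat 1"
proof -
  have "\<exists>A'. A ** A' = mat 1 \<and> A' ** A = mat 1"
    using assms unfolding invertible_def by blast
  then have "A ** matrix_inv A = mat 1 \<and> matrix_inv A ** A = mat 1"
    unfolding matrix_inv_def by (rule someI_ex)
  then show ?thesis by simp
qed

lemma transpose_matrix_inv_symmetric:
  fixes A :: "real^'n^'n"
  assumes "invertible A" and "transpose A = A"
  shows "transpose (matrix_inv A) = matrix_inv A"
proof -
  let ?B = "matrix_inv A"
  have left: "transpose ?B ** A = mat 1"
    using matrix_inv_right[OF assms(1)] assms(2) by (metis matrix_transpose_mul transpose_mat)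
  have "transpose ?B = transpose ?B ** (A ** ?B)"
    using matrix_inv_right[OF assms(1)] by simp
  also have "\<dots> = ?B"
    by (simp add: matrix_mul_assoc left)
  finally show ?thesis .
qed

lemma inner_matrix_vector_symmetric:
  fixes A :: "real^'n^'n"
  assumes "transpose A = A"
  shows "x \<bullet> (A *v y) = y \<bullet> (A *v x)"
  by (metis assms dot_lmul_matrix transpose_matrix_vector inner_commute)

lemma f_star_centered:
  assumes "transpose SX = SX" and "invertible SX"
  shows "f_star muX muY SX SXY x = muY + (matrix_inv SX *v SXY) \<bullet> (x - muX)"
  using inner_matrix_vector_symmetric[OF transpose_matrix_inv_symmetric[OF assms(2,1)], of SXY muX]
  by (simp add: f_star_def inner_diff_left inner_commute)

lemma has_bochner_integral_sq_diff_f_star: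
  assumes M: "prob_space M" and G: "gaussian_XY M X Y muX muY SX SXY SY"
    and sym: "transpose SX = SX" and inv: "invertible SX"
  shows "has_bochner_integral M (\<lambda>\<omega>. (w \<bullet> X \<omega> + b - f_star muX muY SX SXY (X \<omega>))\<^sup>2)
           (sq_loss M X Y (\<lambda>x. w \<bullet> x + b) - sq_loss M X Y (f_star muX muY SX SXY))"
proof -
  define w0 where "w0 = matrix_inv SX *v SXY"
  define b0 where "b0 = muY - w0 \<bullet> muX"
  have f0: "f_star muX muY SX SXY = (\<lambda>x. w0 \<bullet> x + b0)"
    by (simp add: fun_eq_iff f_star_centered[OF sym inv] w0_def b0_def inner_diff_right)
  have normal_eq: "SX *v w0 = SXY"
    by (simp add: w0_def matrix_vector_mul_assoc matrix_inv_right[OF inv])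
  note moment = gaussian_XY_affine_sq_moment[OF M G]
  have loss: "sq_loss M X Y (\<lambda>x. v \<bullet> x + c)
      = v \<bullet> (SX *v v) - 2 * (SXY \<bullet> v) + SY + (muY - v \<bullet> muX - c)\<^sup>2" for v c
  proof -
    have "(Y \<omega> - (v \<bullet> X \<omega> + c))\<^sup>2 = ((-v) \<bullet> X \<omega> + 1 * Y \<omega> - c)\<^sup>2" for \<omega>
      by (simp add: algebra_simps)
    moreover have "SX *v (-v) = - (SX *v v)"
      using matrix_vector_mult_diff_distrib[of SX 0 v] by simp
    ultimately show ?thesis
      using has_bochner_integral_integral_eq[OF moment[of "-v" 1 c]]
      by (simp add: sq_loss_def algebra_simps)
  qed
  have dist: "has_bochner_integral M (\<lambda>\<omega>. (w \<bullet> X \<omega> + b - f_star muX muY SX SXY (X \<omega>))\<^sup>2)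
          ((w - w0) \<bullet> (SX *v (w - w0)) + ((w - w0) \<bullet> muX - (b0 - b))\<^sup>2)"
    using moment[of "w - w0" 0 "b0 - b"] by (simp add: f0 inner_diff_left algebra_simps)
  have "w0 \<bullet> (SX *v w) = w \<bullet> SXY"
    using inner_matrix_vector_symmetric[OF sym, of w0 w] normal_eq by simp
  then have "(w - w0) \<bullet> (SX *v (w - w0)) + ((w - w0) \<bullet> muX - (b0 - b))\<^sup>2
      = sq_loss M X Y (\<lambda>x. w \<bullet> x + b) - sq_loss M X Y (\<lambda>x. w0 \<bullet> x + b0)"
    unfolding loss
    by (simp add: b0_def normal_eq matrix_vector_mult_diff_distrib inner_diff_left
        inner_diff_right inner_commute[of SXY] power2_eq_square algebra_simps)
  with dist show ?thesis
    by (simp add: f0)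
qed

lemma wasserstein2_sq_distr_le:
  assumes "prob_space M" and [measurable]: "F \<in> borel_measurable M" "G \<in> borel_measurable M"
    and "integrable M (\<lambda>\<omega>. (F \<omega> - G \<omega>)\<^sup>2)"
  shows "wasserstein2_sq (distr M borel F) (distr M borel G) \<le> ennreal (\<integral>\<omega>. (F \<omega> - G \<omega>)\<^sup>2 \<partial>M)"
proof -
  interpret prob_space M by fact
  define \<gamma> where "\<gamma> = distr M (borel \<Otimes>\<^sub>M borel) (\<lambda>\<omega>. (F \<omega>, G \<omega>))"
  have "\<gamma> \<in> couplings (distr M borel F) (distr M borel G)"
    unfolding couplings_def \<gamma>_def
    by (auto intro!: prob_space_distr simp: distr_distr comp_def)
  then have "wasserstein2_sq (distr M borel F) (distr M borel G) \<le> \<integral>\<^sup>+ p. ennreal ((fst p - snd p)\<^sup>2) \<partial>\<gamma>"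
    unfolding wasserstein2_sq_def by (rule INF_lower)
  also have "\<dots> = \<integral>\<^sup>+ \<omega>. ennreal ((F \<omega> - G \<omega>)\<^sup>2) \<partial>M"
    unfolding \<gamma>_def by (simp add: nn_integral_distr)
  also have "\<dots> = ennreal (\<integral>\<omega>. (F \<omega> - G \<omega>)\<^sup>2 \<partial>M)"
    using assms(4) by (rule nn_integral_eq_integral) simp
  finally show ?thesis .
qed

theorem proposition4:
  fixes MS :: "'s measure" and MT :: "'t measure"
    and XS :: "'s \<Rightarrow> real^'d" and YS :: "'s \<Rightarrow> real"
    and XT :: "'t \<Rightarrow> real^'d" and YT :: "'t \<Rightarrow> real"
    and muSX muTX :: "real^'d" and muSY muTY :: real
    and SSX STX :: "real^'d^'d" and SSXY STXY :: "real^'d" and SSY STY :: real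
  assumes "prob_space MS" and "prob_space MT"
    and "transpose SSX = SSX" and "transpose STX = STX"
    and "invertible SSX" and "invertible STX"
    and "gaussian_XY MS XS YS muSX muSY SSX SSXY SSY"
    and "gaussian_XY MT XT YT muTX muTY STX STXY STY"
  shows "wasserstein2_sq
           (distr MT borel (\<lambda>\<omega>. f_star muSX muSY SSX SSXY (XT \<omega>)))
           (distr MT borel (\<lambda>\<omega>. f_star muTX muTY STX STXY (XT \<omega>)))
         \<le> ennreal (sq_loss MT XT YT (f_star muSX muSY SSX SSXY)
                    - sq_loss MT XT YT (f_star muTX muTY STX STXY))"
proof -
  let ?fS = "f_star muSX muSY SSX SSXY" and ?fT = "f_star muTX muTY STX STXY"
  obtain w b where fS: "?fS = (\<lambda>x. w \<bullet> x + b)"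
    by (auto simp: f_star_def fun_eq_iff)
  have [measurable]: "XT \<in> borel_measurable MT"
    using assms(8) by (simp add: gaussian_XY_def)
  have regret: "has_bochner_integral MT (\<lambda>\<omega>. (?fS (XT \<omega>) - ?fT (XT \<omega>))\<^sup>2)
                  (sq_loss MT XT YT ?fS - sq_loss MT XT YT ?fT)"
    unfolding fS by (rule has_bochner_integral_sq_diff_f_star[OF assms(2,8,4,6)])
  have "wasserstein2_sq (distr MT borel (\<lambda>\<omega>. ?fS (XT \<omega>))) (distr MT borel (\<lambda>\<omega>. ?fT (XT \<omega>)))
          \<le> ennreal (\<integral>\<omega>. (?fS (XT \<omega>) - ?fT (XT \<omega>))\<^sup>2 \<partial>MT)"
    using regret by (intro wasserstein2_sq_distr_le assms(2)) (auto simp: f_star_def has_bochner_integral_iff)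
  then show ?thesis
    using has_bochner_integral_integral_eq[OF regret] by simp
qed

end
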